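(* Let $\Gamma\subset(\mathbb{RP}^1)^m$ be a realisable real EPBQ-curve, and let $a_{jl},b_{jl},e_{jl}$ be the coefficients of its defining relations. Then for any $j\ne l$, $$(1-a_{jl}e_{jl}-b_{jl}b_{lj})^2-4a_{jl}b_{jl}b_{lj}e_{jl}>0.$$
   Context: A real EPBQ-curve is an irreducible real algebraic curve $\Gamma\subset(\mathbb{RP}^1)^m$ (coordinates $z_1,\dots,z_m$) such that (i) for each $j\ne l$, $a_{jl}z_j^2z_l^2+b_{jl}z_j^2-2z_jz_l+b_{lj}z_l^2+e_{jl}=0$ on $\Gamma$ with real coefficients; (ii) no $z_j$ is identically $0$ or $\infty$ on $\Gamma$; (iii) for $j\ne l$, $z_j,z_l$ are neither directly nor inversely proportional on $\Gamma$. The coefficients are uniquely determined, with $a_{jl}=a_{lj}$, $e_{jl}=e_{lj}$. $\Gamma$ is realisable if there exist $n\ge3$, a decomposition $[n]=I_1\sqcup\dots\sqcup I_m$ into nonempty sets ($p\in I_{j(p)}$), nonzero reals $\lambda_1,\dots,\lambda_n$ with $\lambda_p\ne\pm\lambda_q$ whenever $p\ne q$, $j(p)=j(q)$, and reals $g_{pq}=g_{qp}$ for $p\ne q$, $j(p)=j(q)$, such that the matrices $G=(g_{pq})$, $H=(h_{pq})$ defined by $g_{pp}=h_{pp}=1$; $h_{pq}=\frac{2\lambda_p(\lambda_pg_{pq}-\lambda_q)}{\lambda_p^2-\lambda_q^2}$ if $p\ne q$, $j(p)=j(q)$; and, if $j(p)\ne j(q)$, $g_{pq}=\frac12\left(-\frac{a_{j(p)j(q)}}{\lambda_p\lambda_q}+\frac{\lambda_qb_{j(p)j(q)}}{\lambda_p}+\frac{\lambda_pb_{j(q)j(p)}}{\lambda_q}-\lambda_p\lambda_qe_{j(p)j(q)}\right)$,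 $h_{pq}=\frac{\lambda_pb_{j(q)j(p)}}{\lambda_q}-\lambda_p\lambda_qe_{j(p)j(q)}$, satisfy one of: (S) $G$ positive definite; (E) $G$ degenerate positive semidefinite with all principal minors of sizes $2,\dots,n-1$ strictly positive and no row of $H$ a linear combination of rows of $G$; (L) $G$ non-degenerate with negative index of inertia $1$, all principal minors of sizes $2,\dots,n-1$ strictly positive, and $\sum_{q,r}g^{qr}h_{pq}h_{pr}<0$ for all $p$, where $(g^{qr})=G^{-1}$. *)

theory Defs
  imports "Jordan_Normal_Form.Char_Poly" "Jordan_Normal_Form.DL_Submatrix"
begin

text \<open>A point of RP^1 is encoded as an element of real option: Some z is the
  affine point z, None is the point at infinity.  A point of (RP^1)^m is a map
  nat => real option whose coordinates z_0, ..., z_(m-1) are the values at 0..m-1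
  (the values at indices >= m are normalised to None).\<close>

type_synonym rp1 = "real option"

definition rp_space :: "nat \<Rightarrow> (nat \<Rightarrow> rp1) set" where
  "rp_space m = {P. \<forall>j. m \<le> j \<longrightarrow> P j = None}"

text \<open>Homogeneous coordinates (x : y) of a point of RP^1, with z = x / y.\<close>

definition hx :: "rp1 \<Rightarrow> real" where
  "hx z = (case z of None \<Rightarrow> 1 | Some t \<Rightarrow> t)"

definition hy :: "rp1 \<Rightarrow> real" where
  "hy z = (case z of None \<Rightarrow> 0 | Some t \<Rightarrow> 1)"

text \<open>Real polynomials in the homogeneous coordinates x_j, y_j (j < m): a finitely
  supported coefficient function on exponent pairs (alpha, beta).\<close>

type_synonym hpoly = "((nat \<Rightarrow> nat) \<times> (nat \<Rightarrow> nat)) \<Rightarrow> real"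

definition multihomogeneous :: "nat \<Rightarrow> hpoly \<Rightarrow> bool" where
  "multihomogeneous m f \<longleftrightarrow> finite {k. f k \<noteq> 0} \<and>
     (\<exists>d :: nat \<Rightarrow> nat. \<forall>al be. f (al, be) \<noteq> 0 \<longrightarrow>
        (\<forall>j<m. al j + be j = d j) \<and> (\<forall>j. m \<le> j \<longrightarrow> al j = 0 \<and> be j = 0))"

definition hpoly_eval :: "nat \<Rightarrow> hpoly \<Rightarrow> (nat \<Rightarrow> rp1) \<Rightarrow> real" where
  "hpoly_eval m f P = (\<Sum>k\<in>{k. f k \<noteq> 0}. f k *
      (\<Prod>j<m. hx (P j) ^ (fst k j) * hy (P j) ^ (snd k j)))"

definition zariski_closed :: "nat \<Rightarrow> (nat \<Rightarrow> rp1) set \<Rightarrow> bool" where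
  "zariski_closed m S \<longleftrightarrow> (\<exists>F. (\<forall>f\<in>F. multihomogeneous m f) \<and>
      S = {P \<in> rp_space m. \<forall>f\<in>F. hpoly_eval m f P = 0})"

definition zariski_irreducible :: "nat \<Rightarrow> (nat \<Rightarrow> rp1) set \<Rightarrow> bool" where
  "zariski_irreducible m S \<longleftrightarrow> S \<noteq> {} \<and>
     (\<forall>A B. zariski_closed m A \<longrightarrow> zariski_closed m B \<longrightarrow> S = A \<union> B \<longrightarrow> S = A \<or> S = B)"

text \<open>An irreducible real algebraic curve: an irreducible Zariski closed set of
  (Krull) dimension 1, i.e. the longest chains of irreducible closed subsets
  have length exactly 1.\<close>

definition irreducible_real_curve :: "nat \<Rightarrow> (nat \<Rightarrow> rp1) set \<Rightarrow> bool" where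
  "irreducible_real_curve m \<Gamma> \<longleftrightarrow> zariski_closed m \<Gamma> \<and> zariski_irreducible m \<Gamma> \<and>
     (\<exists>Z0. zariski_closed m Z0 \<and> zariski_irreducible m Z0 \<and> Z0 \<subset> \<Gamma>) \<and>
     \<not> (\<exists>Z0 Z1. zariski_closed m Z0 \<and> zariski_irreducible m Z0 \<and>
                 zariski_closed m Z1 \<and> zariski_irreducible m Z1 \<and> Z0 \<subset> Z1 \<and> Z1 \<subset> \<Gamma>)"

text \<open>The relation a z_j^2 z_l^2 + b_jl z_j^2 - 2 z_j z_l + b_lj z_l^2 + e = 0,
  homogenised in (x_j : y_j), (x_l : y_l) (bidegree (2,2)).\<close>

definition biquad_rel :: "real \<Rightarrow> real \<Rightarrow> real \<Rightarrow> real \<Rightarrow> rp1 \<Rightarrow> rp1 \<Rightarrow> bool" where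
  "biquad_rel a bjl blj e zj zl \<longleftrightarrow>
     a * hx zj ^ 2 * hx zl ^ 2 + bjl * hx zj ^ 2 * hy zl ^ 2
     - 2 * hx zj * hy zj * hx zl * hy zl + blj * hy zj ^ 2 * hx zl ^ 2
     + e * hy zj ^ 2 * hy zl ^ 2 = 0"

text \<open>Real EPBQ-curve Gamma with coefficients a, b, e (indices j, l < m).
  Since the coefficients are uniquely determined by Gamma, these are
  "the coefficients of its defining relations".\<close>

definition real_EPBQ_curve :: "nat \<Rightarrow> (nat \<Rightarrow> rp1) set \<Rightarrow>
    (nat \<Rightarrow> nat \<Rightarrow> real) \<Rightarrow> (nat \<Rightarrow> nat \<Rightarrow> real) \<Rightarrow> (nat \<Rightarrow> nat \<Rightarrow> real) \<Rightarrow> bool" where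
  "real_EPBQ_curve m \<Gamma> a b e \<longleftrightarrow>
     irreducible_real_curve m \<Gamma> \<and>
     (\<forall>j<m. \<forall>l<m. j \<noteq> l \<longrightarrow>
        (\<forall>P\<in>\<Gamma>. biquad_rel (a j l) (b j l) (b l j) (e j l) (P j) (P l))) \<and>
     (\<forall>j<m. \<not> (\<forall>P\<in>\<Gamma>. P j = Some 0) \<and> \<not> (\<forall>P\<in>\<Gamma>. P j = None)) \<and>
     (\<forall>j<m. \<forall>l<m. j \<noteq> l \<longrightarrow>
        \<not> (\<exists>c::real. c \<noteq> 0 \<and> (\<forall>P\<in>\<Gamma>. hx (P j) * hy (P l) = c * hy (P j) * hx (P l))) \<and>
        \<not> (\<exists>c::real. c \<noteq> 0 \<and> (\<forall>P\<in>\<Gamma>. hx (P j) * hx (P l) = c * hy (P j) * hy (P l))))"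

definition positive_definite_mat :: "nat \<Rightarrow> real mat \<Rightarrow> bool" where
  "positive_definite_mat n G \<longleftrightarrow>
     (\<forall>x \<in> carrier_vec n. x \<noteq> 0\<^sub>v n \<longrightarrow> x \<bullet> (G *\<^sub>v x) > 0)"

definition positive_semidefinite_mat :: "nat \<Rightarrow> real mat \<Rightarrow> bool" where
  "positive_semidefinite_mat n G \<longleftrightarrow> (\<forall>x \<in> carrier_vec n. x \<bullet> (G *\<^sub>v x) \<ge> 0)"

definition neg_inertia_index :: "real mat \<Rightarrow> nat" where
  "neg_inertia_index G =
     (\<Sum>x\<in>{x::real. x < 0 \<and> poly (char_poly G) x = 0}. order x (char_poly G))"

definition principal_minors_pos :: "nat \<Rightarrow> real mat \<Rightarrow> bool" where
  "principal_minors_pos n G \<longleftrightarrow>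
     (\<forall>I. I \<subseteq> {0..<n} \<longrightarrow> 2 \<le> card I \<longrightarrow> card I \<le> n - 1 \<longrightarrow> det (submatrix G I I) > 0)"

definition Gmat :: "nat \<Rightarrow> (nat \<Rightarrow> nat) \<Rightarrow> (nat \<Rightarrow> real) \<Rightarrow> (nat \<Rightarrow> nat \<Rightarrow> real) \<Rightarrow>
    (nat \<Rightarrow> nat \<Rightarrow> real) \<Rightarrow> (nat \<Rightarrow> nat \<Rightarrow> real) \<Rightarrow> (nat \<Rightarrow> nat \<Rightarrow> real) \<Rightarrow> real mat" where
  "Gmat n J lam g a b e = mat n n (\<lambda>(p, q).
     if p = q then 1
     else if J p = J q then g p q
     else (1/2) * (- a (J p) (J q) / (lam p * lam q) + lam q * b (J p) (J q) / lam p
                   + lam p * b (J q) (J p) / lam q - lam p * lam q * e (J p) (J q)))"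

definition Hmat :: "nat \<Rightarrow> (nat \<Rightarrow> nat) \<Rightarrow> (nat \<Rightarrow> real) \<Rightarrow> (nat \<Rightarrow> nat \<Rightarrow> real) \<Rightarrow>
    (nat \<Rightarrow> nat \<Rightarrow> real) \<Rightarrow> (nat \<Rightarrow> nat \<Rightarrow> real) \<Rightarrow> real mat" where
  "Hmat n J lam g b e = mat n n (\<lambda>(p, q).
     if p = q then 1
     else if J p = J q then 2 * lam p * (lam p * g p q - lam q) / (lam p ^ 2 - lam q ^ 2)
     else lam p * b (J q) (J p) / lam q - lam p * lam q * e (J p) (J q))"

definition condition_S :: "nat \<Rightarrow> real mat \<Rightarrow> real mat \<Rightarrow> bool" where
  "condition_S n G H \<longleftrightarrow> positive_definite_mat n G"

definition condition_E :: "nat \<Rightarrow> real mat \<Rightarrow> real mat \<Rightarrow> bool" where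
  "condition_E n G H \<longleftrightarrow> positive_semidefinite_mat n G \<and> det G = 0 \<and>
     principal_minors_pos n G \<and>
     \<not> (\<exists>p<n. \<exists>c :: nat \<Rightarrow> real. \<forall>q<n. H $$ (p, q) = (\<Sum>r<n. c r * G $$ (r, q)))"

definition condition_L :: "nat \<Rightarrow> real mat \<Rightarrow> real mat \<Rightarrow> bool" where
  "condition_L n G H \<longleftrightarrow> det G \<noteq> 0 \<and> neg_inertia_index G = 1 \<and>
     principal_minors_pos n G \<and>
     (\<forall>Gi \<in> carrier_mat n n. G * Gi = 1\<^sub>m n \<longrightarrow>
        (\<forall>p<n. (\<Sum>q<n. \<Sum>r<n. Gi $$ (q, r) * H $$ (p, q) * H $$ (p, r)) < 0))"

text \<open>Indices: [n] = {0..<n}, coordinates j = 0..<m; J p is j(p).\<close>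

definition realisable :: "nat \<Rightarrow> (nat \<Rightarrow> nat \<Rightarrow> real) \<Rightarrow> (nat \<Rightarrow> nat \<Rightarrow> real) \<Rightarrow>
    (nat \<Rightarrow> nat \<Rightarrow> real) \<Rightarrow> bool" where
  "realisable m a b e \<longleftrightarrow>
     (\<exists>n J lam g. 3 \<le> n \<and>
        (\<forall>p<n. J p < m) \<and> (\<forall>j<m. \<exists>p<n. J p = j) \<and>
        (\<forall>p<n. lam p \<noteq> 0) \<and>
        (\<forall>p<n. \<forall>q<n. p \<noteq> q \<and> J p = J q \<longrightarrow> lam p \<noteq> lam q \<and> lam p \<noteq> - lam q) \<and>
        (\<forall>p<n. \<forall>q<n. p \<noteq> q \<and> J p = J q \<longrightarrow> g p q = g q p) \<and>
        (let G = Gmat n J lam g a b e; H = Hmat n J lam g b e in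
           condition_S n G H \<or> condition_E n G H \<or> condition_L n G H))"

end

theory Submission
  imports Defs "HOL-Library.Quadratic_Discriminant"
begin

text \<open>Suppose the discriminant were \<open>\<le> 0\<close>. Irreducibility together with (ii) and (iii)
  forces \<open>a\<^sub>l\<^sub>j = a\<^sub>j\<^sub>l\<close> and \<open>e\<^sub>l\<^sub>j = e\<^sub>j\<^sub>l\<close>, so for \<open>p \<in> I\<^sub>j\<close>, \<open>q \<in> I\<^sub>l\<close> the principal
  block of \<open>G\<close> on \<open>{p, q}\<close> is \<open>[[1, g], [g, 1]]\<close>, and each of (S), (E), (L) makes it
  positive definite: \<open>\<bar>g\<bar> < 1\<close>. With \<open>y = \<lambda>\<^sub>q\<close> this says that the quadratic
  \<open>f = biquad_discr\<close>, whose discriminant is the quantity of the theorem, is negative at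
  \<open>-1/y\<^sup>2\<close>; hence \<open>f \<le> 0\<close> everywhere. Viewed as a quadratic in \<open>z\<^sub>j\<close>, the relation has
  reduced discriminant \<open>f (z\<^sub>l\<^sup>2)\<close>, so on \<open>\<Gamma>\<close> either \<open>f (z\<^sub>l\<^sup>2) = 0\<close>, or \<open>z\<^sub>j = \<infinity>\<close> and
  \<open>a z\<^sub>l\<^sup>2 + b\<^sub>j\<^sub>l = 0\<close>, or \<open>z\<^sub>l = \<infinity>\<close>: \<open>z\<^sub>l\<close> takes finitely many values, and so does
  \<open>z\<^sub>j\<close> by symmetry. On an irreducible curve such coordinates are constant, hence
  proportional, contradicting (iii).\<close>

section \<open>The biquadratic relation over the reals\<close>

lemma quadratic_nonpos_if_discrim_nonpos:
  fixes \<alpha> \<beta> \<gamma> v\<^sub>0 v :: real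
  assumes "discrim \<alpha> \<beta> \<gamma> \<le> 0" and "\<alpha> * v\<^sub>0\<^sup>2 + \<beta> * v\<^sub>0 + \<gamma> < 0"
  shows "\<alpha> * v\<^sup>2 + \<beta> * v + \<gamma> \<le> 0"
proof -
  have square: "4 * \<alpha> * (\<alpha> * w\<^sup>2 + \<beta> * w + \<gamma>) = (2 * \<alpha> * w + \<beta>)\<^sup>2 - discrim \<alpha> \<beta> \<gamma>" for w
    by (simp add: discrim_def algebra_simps power2_eq_square)
  have same_sign: "\<alpha> * (\<alpha> * w\<^sup>2 + \<beta> * w + \<gamma>) \<ge> 0" for w
    using square[of w] assms(1) zero_le_power2[of "2 * \<alpha> * w + \<beta>"] by linarith
  have "\<alpha> \<le> 0"
    using same_sign[of v\<^sub>0] assms(2) by (smt (verit) mult_pos_neg)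
  show ?thesis
  proof (cases "\<alpha> = 0")
    case True
    then have "\<beta> = 0" using assms(1) by (simp add: discrim_def)
    with True assms(2) show ?thesis by simp
  next
    case False
    with \<open>\<alpha> \<le> 0\<close> same_sign[of v] show ?thesis by (simp add: zero_le_mult_iff)
  qed
qed

text \<open>For fixed \<open>z\<^sub>l = w\<close> the relation is a quadratic equation in \<open>z\<^sub>j\<close> with reduced
  discriminant \<open>w\<^sup>2 - (A w\<^sup>2 + B) (B' w\<^sup>2 + E) = biquad_discr A B B' E (w\<^sup>2)\<close>.\<close>

definition biquad_discr :: "real \<Rightarrow> real \<Rightarrow> real \<Rightarrow> real \<Rightarrow> real \<Rightarrow> real" where
  "biquad_discr A B B' E V = - A * B' * V\<^sup>2 + (1 - A * E - B * B') * V - B * E"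

lemma biquad_rel_swap: "biquad_rel A B B' E z w \<longleftrightarrow> biquad_rel A B' B E w z"
  unfolding biquad_rel_def by (simp add: algebra_simps)

lemma biquad_rel_None_Some: "biquad_rel A B B' E None (Some w) \<longleftrightarrow> A * w\<^sup>2 + B = 0"
  by (simp add: biquad_rel_def hx_def hy_def)

lemma biquad_rel_Some_Some_square:
  assumes "biquad_rel A B B' E (Some z) (Some w)"
  shows "((A * w\<^sup>2 + B) * z - w)\<^sup>2 = biquad_discr A B B' E (w\<^sup>2)"
proof -
  have "A * z\<^sup>2 * w\<^sup>2 + B * z\<^sup>2 - 2 * z * w + B' * w\<^sup>2 + E = 0"
    using assms by (simp add: biquad_rel_def hx_def hy_def)
  then have "(A * w\<^sup>2 + B) * ((A * z\<^sup>2 * w\<^sup>2 + B * z\<^sup>2 - 2 * z * w + B' * w\<^sup>2 + E)) = 0"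
    by simp
  then show ?thesis
    unfolding biquad_discr_def by (simp add: algebra_simps power2_eq_square power4_eq_xxxx)
qed

lemma biquad_discr_neg_if_bounded:
  fixes A B B' E x y :: real
  assumes "x \<noteq> 0" "y \<noteq> 0" and bound: "\<bar>- A / (x * y) + y * B / x + x * B' / y - x * y * E\<bar> < 2"
  shows "biquad_discr A B B' E (- 1 / y\<^sup>2) < 0"
proof -
  define X Y where "X = x\<^sup>2" and "Y = y\<^sup>2"
  have "X > 0" "Y > 0" using assms by (simp_all add: X_def Y_def)
  define \<alpha> \<beta> where "\<alpha> = B' - E * Y" and "\<beta> = B * Y - A"
  have "\<alpha> * X + \<beta> = (x * y) * (- A / (x * y) + y * B / x + x * B' / y - x * y * E)"
    using assms(1,2) by (simp add: \<alpha>_def \<beta>_def X_def Y_def field_simps power2_eq_square)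
  then have "\<bar>\<alpha> * X + \<beta>\<bar> < 2 * \<bar>x * y\<bar>"
    using bound assms(1,2) by (simp add: abs_mult)
  then have "\<bar>\<alpha> * X + \<beta>\<bar>\<^sup>2 < (2 * \<bar>x * y\<bar>)\<^sup>2"
    by (rule power_strict_mono) auto
  then have "(\<alpha> * X + \<beta>)\<^sup>2 < 4 * X * Y"
    by (simp add: X_def Y_def power_mult_distrib)
  moreover have "4 * \<alpha> * \<beta> * X \<le> (\<alpha> * X + \<beta>)\<^sup>2"
    using zero_le_power2[of "\<alpha> * X - \<beta>"] by (simp add: power2_eq_square algebra_simps)
  ultimately have "(4 * X) * (\<alpha> * \<beta>) < (4 * X) * Y"
    by (simp only: mult_ac)
  then have "\<alpha> * \<beta> < Y"
    using \<open>X > 0\<close> by simp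
  then have "0 < E * B * Y\<^sup>2 + (1 - A * E - B * B') * Y + A * B'"
    by (simp add: \<alpha>_def \<beta>_def algebra_simps power2_eq_square)
  moreover have "biquad_discr A B B' E (- 1 / y\<^sup>2)
      = - (E * B * Y\<^sup>2 + (1 - A * E - B * B') * Y + A * B') / Y\<^sup>2"
    using assms(2) by (simp add: biquad_discr_def Y_def field_simps power2_eq_square)
  ultimately show ?thesis
    using \<open>Y > 0\<close> by (simp add: divide_neg_pos)
qed

lemma biquad_rel_finite_value_cases:
  assumes "biquad_rel A B B' E z (Some w)"
  shows "A * w\<^sup>2 + B = 0 \<or> biquad_discr A B B' E (w\<^sup>2) \<ge> 0"
proof (cases z)
  case None
  with assms show ?thesis by (simp add: biquad_rel_None_Some)
next
  case (Some z')
  with assms show ?thesis by (metis biquad_rel_Some_Some_square zero_le_power2)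
qed

lemma biquad_rel_values_finite:
  assumes disc: "discrim (- A * B') (1 - A * E - B * B') (- B * E) \<le> 0"
    and neg: "biquad_discr A B B' E V\<^sub>0 < 0"
  shows "finite {w. \<exists>z. biquad_rel A B B' E z w}"
proof -
  have nonpos: "biquad_discr A B B' E V \<le> 0" for V
    using quadratic_nonpos_if_discrim_nonpos[OF disc, of V\<^sub>0 V] neg
    by (simp add: biquad_discr_def)
  define p_inf p_fin
    where "p_inf = [:B, 0, A:]" and "p_fin = [:- B * E, 0, 1 - A * E - B * B', 0, - A * B':]"
  have poly_p_inf: "poly p_inf w = A * w\<^sup>2 + B" for w
    by (simp add: p_inf_def algebra_simps power2_eq_square)
  have poly_p_fin: "poly p_fin w = biquad_discr A B B' E (w\<^sup>2)" for w
    by (simp add: p_fin_def biquad_discr_def algebra_simps power2_eq_square power4_eq_xxxx)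
  have "p_inf \<noteq> 0"
    using disc by (auto simp: p_inf_def discrim_def)
  moreover have "p_fin \<noteq> 0"
  proof
    assume "p_fin = 0"
    then have "B * E = 0" "1 - A * E - B * B' = 0" "A * B' = 0"
      using coeff_0[of 0] coeff_0[of 2] coeff_0[of 4] by (simp_all add: p_fin_def eval_nat_numeral)
    with neg show False by (simp add: biquad_discr_def)
  qed
  moreover have "{w. \<exists>z. biquad_rel A B B' E z w}
      \<subseteq> insert None (Some ` ({w. poly p_inf w = 0} \<union> {w. poly p_fin w = 0}))"
  proof (intro subsetI, elim CollectE exE)
    fix z v assume rel: "biquad_rel A B B' E z v"
    show "v \<in> insert None (Some ` ({w. poly p_inf w = 0} \<union> {w. poly p_fin w = 0}))"
    proof (cases v)
      case (Some w)
      with biquad_rel_finite_value_cases[of A B B' E z w] rel nonpos[of "w\<^sup>2"] show ?thesis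
        by (auto simp: poly_p_inf poly_p_fin)
    qed simp
  qed
  ultimately show ?thesis
    by (auto intro: finite_subset poly_roots_finite)
qed

lemma biquad_rel_values_finite_if_bounded:
  fixes A B B' E x y :: real
  assumes disc: "(1 - A * E - B * B')\<^sup>2 - 4 * A * B * B' * E \<le> 0"
    and "x \<noteq> 0" "y \<noteq> 0" and bound: "\<bar>- A / (x * y) + y * B / x + x * B' / y - x * y * E\<bar> < 2"
  shows "finite {w. \<exists>z. biquad_rel A B B' E z w}" and "finite {z. \<exists>w. biquad_rel A B B' E z w}"
proof -
  have disc_l: "discrim (- A * B') (1 - A * E - B * B') (- B * E) \<le> 0"
    and disc_j: "discrim (- A * B) (1 - A * E - B' * B) (- B' * E) \<le> 0"
    using disc by (simp_all add: discrim_def algebra_simps)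
  have bound': "\<bar>- A / (y * x) + x * B' / y + y * B / x - y * x * E\<bar> < 2"
    using bound by (simp add: algebra_simps)
  show "finite {w. \<exists>z. biquad_rel A B B' E z w}"
    using biquad_rel_values_finite[OF disc_l biquad_discr_neg_if_bounded[OF assms(2-4)]] .
  show "finite {z. \<exists>w. biquad_rel A B B' E z w}"
    using biquad_rel_values_finite[OF disc_j biquad_discr_neg_if_bounded[OF assms(3,2) bound']]
    by (simp add: biquad_rel_swap)
qed

section \<open>Polynomial conditions on \<open>(\<real>P\<^sup>1)\<^sup>m\<close> and irreducibility\<close>

lemma hx_eq_0_iff: "hx v = 0 \<longleftrightarrow> v = Some 0"
  by (cases v) (auto simp: hx_def)

lemma hy_eq_0_iff: "hy v = 0 \<longleftrightarrow> v = None"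
  by (cases v) (auto simp: hy_def)

lemma hpoly_eval_superset:
  assumes "finite S" "{\<kappa>. f \<kappa> \<noteq> 0} \<subseteq> S"
  shows "hpoly_eval m f P = (\<Sum>\<kappa>\<in>S. f \<kappa> * (\<Prod>j<m. hx (P j) ^ fst \<kappa> j * hy (P j) ^ snd \<kappa> j))"
  unfolding hpoly_eval_def by (rule sum.mono_neutral_left) (use assms in auto)

lemma monomial_sum_support:
  "{\<kappa>. (\<Sum>i\<in>I. if \<kappa> = E i then c i else 0) \<noteq> 0} \<subseteq> E ` I"
proof
  fix \<kappa> assume "\<kappa> \<in> {\<kappa>. (\<Sum>i\<in>I. if \<kappa> = E i then c i else 0) \<noteq> 0}"
  then obtain i where "i \<in> I" "(if \<kappa> = E i then c i else 0) \<noteq> 0"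
    by (auto dest: sum.not_neutral_contains_not_neutral)
  then show "\<kappa> \<in> E ` I"
    by (auto split: if_splits)
qed

lemma hpoly_eval_monomial_sum:
  assumes "finite I"
  shows "hpoly_eval m (\<lambda>\<kappa>. \<Sum>i\<in>I. if \<kappa> = E i then c i else 0) P
    = (\<Sum>i\<in>I. c i * (\<Prod>j<m. hx (P j) ^ fst (E i) j * hy (P j) ^ snd (E i) j))"
proof -
  let ?mon = "\<lambda>\<kappa>. \<Prod>j<m. hx (P j) ^ fst \<kappa> j * hy (P j) ^ snd \<kappa> j"
  have "hpoly_eval m (\<lambda>\<kappa>. \<Sum>i\<in>I. if \<kappa> = E i then c i else 0) P
      = (\<Sum>\<kappa>\<in>E ` I. (\<Sum>i\<in>I. if \<kappa> = E i then c i else 0) * ?mon \<kappa>)"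
    by (intro hpoly_eval_superset finite_imageI assms monomial_sum_support)
  also have "\<dots> = (\<Sum>\<kappa>\<in>E ` I. \<Sum>i\<in>I. if \<kappa> = E i then c i * ?mon \<kappa> else 0)"
    by (auto simp: sum_distrib_right intro!: sum.cong)
  also have "\<dots> = (\<Sum>i\<in>I. \<Sum>\<kappa>\<in>E ` I. if \<kappa> = E i then c i * ?mon \<kappa> else 0)"
    by (rule sum.swap)
  also have "\<dots> = (\<Sum>i\<in>I. c i * ?mon (E i))"
    using assms by simp
  finally show ?thesis .
qed

lemma multihomogeneous_monomial_sum:
  assumes "finite I"
    and "\<forall>i\<in>I. (\<forall>j<m. fst (E i) j + snd (E i) j = d j) \<and>
                (\<forall>j. m \<le> j \<longrightarrow> fst (E i) j = 0 \<and> snd (E i) j = 0)"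
  shows "multihomogeneous m (\<lambda>\<kappa>. \<Sum>i\<in>I. if \<kappa> = E i then c i else 0)"
  unfolding multihomogeneous_def
proof (rule conjI)
  show "finite {\<kappa>. (\<Sum>i\<in>I. if \<kappa> = E i then c i else 0) \<noteq> 0}"
    using assms(1) monomial_sum_support by (rule finite_surj)
  show "\<exists>d. \<forall>\<alpha> \<beta>. (\<Sum>i\<in>I. if (\<alpha>, \<beta>) = E i then c i else 0) \<noteq> 0 \<longrightarrow>
      (\<forall>j<m. \<alpha> j + \<beta> j = d j) \<and> (\<forall>j. m \<le> j \<longrightarrow> \<alpha> j = 0 \<and> \<beta> j = 0)"
  proof (intro exI[of _ d] allI impI)
    fix \<alpha> \<beta> assume "(\<Sum>i\<in>I. if (\<alpha>, \<beta>) = E i then c i else 0) \<noteq> 0"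
    then have "(\<alpha>, \<beta>) \<in> E ` I"
      by (intro subsetD[OF monomial_sum_support] CollectI)
    then obtain i where "i \<in> I" "E i = (\<alpha>, \<beta>)"
      by auto
    with assms(2) show "(\<forall>j<m. \<alpha> j + \<beta> j = d j) \<and> (\<forall>j. m \<le> j \<longrightarrow> \<alpha> j = 0 \<and> \<beta> j = 0)"
      by force
  qed
qed

definition poly_condition :: "nat \<Rightarrow> ((nat \<Rightarrow> rp1) \<Rightarrow> bool) \<Rightarrow> bool" where
  "poly_condition m Q \<longleftrightarrow> (\<exists>f. multihomogeneous m f \<and> (\<forall>P. hpoly_eval m f P = 0 \<longleftrightarrow> Q P))"

lemma poly_condition_cong:
  "poly_condition m Q \<Longrightarrow> (\<And>P. Q P \<longleftrightarrow> Q' P) \<Longrightarrow> poly_condition m Q'"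
  unfolding poly_condition_def by auto

lemma poly_condition_bihomogeneous:
  assumes "j < m" "l < m"
  shows "poly_condition m (\<lambda>P. (\<Sum>i\<le>d. \<Sum>k\<le>d'. c i k *
    (hx (P j) ^ i * hy (P j) ^ (d - i) * (hx (P l) ^ k * hy (P l) ^ (d' - k)))) = 0)"
proof -
  \<comment> \<open>Exponents add up, so the case \<open>l = j\<close> gives binary forms in one coordinate.\<close>
  define ex :: "nat \<Rightarrow> nat \<Rightarrow> nat \<Rightarrow> nat" where
    "ex i k t = (if t = j then i else 0) + (if t = l then k else 0)" for i k t
  define E where "E = (\<lambda>(i, k). (ex i k, ex (d - i) (d' - k)))"
  define f where "f = (\<lambda>\<kappa>. \<Sum>\<iota>\<in>{..d} \<times> {..d'}. if \<kappa> = E \<iota> then case_prod c \<iota> else 0)"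
  have power_ex: "u ^ ex i k t = (if t = j then u ^ i else 1) * (if t = l then u ^ k else 1)"
    for u :: real and i k t
    by (simp add: ex_def power_add)
  have monomial: "(\<Prod>t<m. hx (P t) ^ ex i k t * hy (P t) ^ ex i' k' t)
      = hx (P j) ^ i * hy (P j) ^ i' * (hx (P l) ^ k * hy (P l) ^ k')" for P i k i' k'
    using assms by (simp add: power_ex prod.distrib)
  have "multihomogeneous m f"
    unfolding f_def
    by (rule multihomogeneous_monomial_sum[where d = "ex d d'"])
      (use assms in \<open>auto simp: E_def ex_def\<close>)
  moreover have "hpoly_eval m f P = (\<Sum>i\<le>d. \<Sum>k\<le>d'. c i k *
      (hx (P j) ^ i * hy (P j) ^ (d - i) * (hx (P l) ^ k * hy (P l) ^ (d' - k))))" for P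
    unfolding f_def hpoly_eval_monomial_sum[OF finite_cartesian_product[OF finite_atMost finite_atMost]]
    by (simp add: sum.cartesian_product E_def split_def monomial)
  ultimately show ?thesis
    unfolding poly_condition_def by (intro exI[of _ f]) simp
qed

lemma binary_form_zero_set:
  assumes "finite W"
  obtains d c where "\<And>z. (\<Sum>i\<le>d. c i * (hx z ^ i * hy z ^ (d - i))) = 0 \<longleftrightarrow> z \<in> W"
proof -
  \<comment> \<open>The homogenisation of \<open>\<Prod>t. X - t\<close>, with one extra factor \<open>y\<close> if \<open>\<infinity> \<in> W\<close>.\<close>
  define T where "T = {t. Some t \<in> W}"
  define p where "p = (\<Prod>t\<in>T. [:- t, 1:])"
  define d where "d = card T + (if None \<in> W then 1 else 0)"
  have "finite T"
    using finite_vimageI[OF assms, of Some] by (simp add: T_def vimage_def)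
  then have deg: "degree p = card T"
    by (simp add: p_def degree_prod_eq_sum_degree)
  have lead: "lead_coeff p = 1"
    by (simp add: p_def lead_coeff_prod)
  have "(\<Sum>i\<le>d. coeff p i * (hx z ^ i * hy z ^ (d - i))) = 0 \<longleftrightarrow> z \<in> W" for z
  proof (cases z)
    case None
    have "(\<Sum>i\<le>d. coeff p i * (hx z ^ i * hy z ^ (d - i)))
        = (\<Sum>i\<le>d. if i = d then coeff p i else 0)"
      by (intro sum.cong) (auto simp: None hx_def hy_def)
    then show ?thesis
      using None deg lead by (auto simp: d_def coeff_eq_0)
  next
    case (Some t)
    have "(\<Sum>i\<le>d. coeff p i * (hx z ^ i * hy z ^ (d - i)))
        = poly (\<Sum>i\<le>d. monom (coeff p i) i) t"
      by (simp add: Some hx_def hy_def poly_sum poly_monom)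
    also have "\<dots> = poly p t"
      using poly_as_sum_of_monoms'[of p d] deg by (simp add: d_def)
    also have "\<dots> = (\<Prod>s\<in>T. t - s)"
      by (simp add: p_def poly_prod)
    finally show ?thesis
      using \<open>finite T\<close> by (simp add: Some T_def)
  qed
  then show ?thesis
    by (rule that)
qed

lemma poly_condition_coord_mem:
  assumes "j < m" "finite W"
  shows "poly_condition m (\<lambda>P. P j \<in> W)"
proof -
  obtain d c where zero: "\<And>z. (\<Sum>i\<le>d. c i * (hx z ^ i * hy z ^ (d - i))) = 0 \<longleftrightarrow> z \<in> W"
    using binary_form_zero_set[OF assms(2)] by blast
  show ?thesis
    by (rule poly_condition_cong[OF poly_condition_bihomogeneous[OF assms(1) assms(1),
          where d = d and d' = 0 and c = "\<lambda>i k. c i"]]) (simp add: zero)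
qed

lemma poly_condition_prod_eq:
  assumes "j < m" "l < m"
  shows "poly_condition m (\<lambda>P. hx (P j) * hx (P l) = c * hy (P j) * hy (P l))"
  by (rule poly_condition_cong[OF poly_condition_bihomogeneous[OF assms, where d = 1 and d' = 1 and
        c = "\<lambda>i k. if i = 1 \<and> k = 1 then 1 else if i = 0 \<and> k = 0 then - c else 0"]])
    (simp add: atMost_Suc algebra_simps)

lemma zariski_closed_restrict:
  assumes "zariski_closed m \<Gamma>" "poly_condition m Q"
  shows "zariski_closed m {P \<in> \<Gamma>. Q P}"
proof -
  obtain F where F: "\<forall>f\<in>F. multihomogeneous m f"
    "\<Gamma> = {P \<in> rp_space m. \<forall>f\<in>F. hpoly_eval m f P = 0}"
    using assms(1) unfolding zariski_closed_def by blast
  obtain g where g: "multihomogeneous m g" "\<And>P. hpoly_eval m g P = 0 \<longleftrightarrow> Q P"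
    using assms(2) unfolding poly_condition_def by blast
  have "{P \<in> \<Gamma>. Q P} = {P \<in> rp_space m. \<forall>f\<in>insert g F. hpoly_eval m f P = 0}"
    using F(2) g(2) by auto
  with F(1) g(1) show ?thesis
    unfolding zariski_closed_def by blast
qed

lemma zariski_irreducible_cases:
  assumes "zariski_closed m \<Gamma>" "zariski_irreducible m \<Gamma>"
    and "poly_condition m Q\<^sub>1" "poly_condition m Q\<^sub>2" "\<forall>P\<in>\<Gamma>. Q\<^sub>1 P \<or> Q\<^sub>2 P"
  shows "(\<forall>P\<in>\<Gamma>. Q\<^sub>1 P) \<or> (\<forall>P\<in>\<Gamma>. Q\<^sub>2 P)"
proof -
  have "zariski_closed m {P \<in> \<Gamma>. Q\<^sub>1 P}" "zariski_closed m {P \<in> \<Gamma>. Q\<^sub>2 P}"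
    using zariski_closed_restrict[OF assms(1)] assms(3,4) by blast+
  moreover have "\<Gamma> = {P \<in> \<Gamma>. Q\<^sub>1 P} \<union> {P \<in> \<Gamma>. Q\<^sub>2 P}"
    using assms(5) by blast
  ultimately have "\<Gamma> = {P \<in> \<Gamma>. Q\<^sub>1 P} \<or> \<Gamma> = {P \<in> \<Gamma>. Q\<^sub>2 P}"
    using assms(2) unfolding zariski_irreducible_def by blast
  then show ?thesis
    by blast
qed

lemma zariski_irreducible_coord_const:
  assumes "zariski_closed m \<Gamma>" "zariski_irreducible m \<Gamma>" "j < m"
    and "finite V" "\<forall>P\<in>\<Gamma>. P j \<in> V"
  shows "\<exists>v. \<forall>P\<in>\<Gamma>. P j = v"
  using assms(4,5)
proof (induction V rule: finite_induct)
  case empty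
  then show ?case by auto
next
  case (insert v V)
  have "(\<forall>P\<in>\<Gamma>. P j \<in> {v}) \<or> (\<forall>P\<in>\<Gamma>. P j \<in> V)"
    by (rule zariski_irreducible_cases[OF assms(1,2) poly_condition_coord_mem[OF assms(3)]
          poly_condition_coord_mem[OF assms(3)]]) (use insert in auto)
  with insert.IH show ?case
    by auto
qed

lemma zariski_irreducible_prod_proportional:
  assumes "zariski_closed m \<Gamma>" "zariski_irreducible m \<Gamma>" "j < m" "l < m" and "k > 0"
    and "\<forall>P\<in>\<Gamma>. (hx (P j) * hx (P l))\<^sup>2 = k * (hy (P j) * hy (P l))\<^sup>2"
  shows "\<exists>c. c \<noteq> 0 \<and> (\<forall>P\<in>\<Gamma>. hx (P j) * hx (P l) = c * hy (P j) * hy (P l))"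
proof -
  define c where "c = sqrt k"
  have "c > 0" "c\<^sup>2 = k"
    using assms(5) by (simp_all add: c_def)
  have "\<forall>P\<in>\<Gamma>. hx (P j) * hx (P l) = c * hy (P j) * hy (P l) \<or>
      hx (P j) * hx (P l) = - c * hy (P j) * hy (P l)"
  proof
    fix P assume "P \<in> \<Gamma>"
    then have "(hx (P j) * hx (P l))\<^sup>2 = (c * hy (P j) * hy (P l))\<^sup>2"
      using assms(6) \<open>c\<^sup>2 = k\<close> by (simp add: power_mult_distrib)
    then show "hx (P j) * hx (P l) = c * hy (P j) * hy (P l) \<or>
        hx (P j) * hx (P l) = - c * hy (P j) * hy (P l)"
      by (simp add: power2_eq_iff)
  qed
  then have "(\<forall>P\<in>\<Gamma>. hx (P j) * hx (P l) = c * hy (P j) * hy (P l)) \<or>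
      (\<forall>P\<in>\<Gamma>. hx (P j) * hx (P l) = - c * hy (P j) * hy (P l))"
    by (intro zariski_irreducible_cases[OF assms(1,2)] poly_condition_prod_eq assms(3,4))
  then show ?thesis
    using \<open>c > 0\<close> by (metis neg_0_equal_iff_equal order_less_irrefl)
qed

lemma zariski_irreducible_binary_quadric:
  assumes "zariski_closed m \<Gamma>" "zariski_irreducible m \<Gamma>" "j < m" "l < m"
    and "\<alpha> \<noteq> 0 \<or> \<epsilon> \<noteq> 0"
    and quadric: "\<forall>P\<in>\<Gamma>. \<alpha> * (hx (P j) * hx (P l))\<^sup>2 + \<epsilon> * (hy (P j) * hy (P l))\<^sup>2 = 0"
  shows "(\<forall>P\<in>\<Gamma>. P j = Some 0 \<or> P l = Some 0) \<or> (\<forall>P\<in>\<Gamma>. P j = None \<or> P l = None) \<or>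
    (\<exists>c. c \<noteq> 0 \<and> (\<forall>P\<in>\<Gamma>. hx (P j) * hx (P l) = c * hy (P j) * hy (P l)))"
proof (cases "\<alpha> = 0")
  case True
  with assms(5) have "\<epsilon> \<noteq> 0"
    by simp
  have "\<forall>P\<in>\<Gamma>. P j = None \<or> P l = None"
  proof
    fix P assume "P \<in> \<Gamma>"
    from bspec[OF quadric this] True have "\<epsilon> * (hy (P j) * hy (P l))\<^sup>2 = 0"
      by simp
    with \<open>\<epsilon> \<noteq> 0\<close> show "P j = None \<or> P l = None"
      by (simp add: hy_eq_0_iff)
  qed
  then show ?thesis
    by (rule disjI2[OF disjI1])
next
  case False
  define k where "k = - \<epsilon> / \<alpha>"
  have square: "\<forall>P\<in>\<Gamma>. (hx (P j) * hx (P l))\<^sup>2 = k * (hy (P j) * hy (P l))\<^sup>2"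
  proof
    fix P assume "P \<in> \<Gamma>"
    from bspec[OF quadric this]
    have "\<alpha> * (hx (P j) * hx (P l))\<^sup>2 = - \<epsilon> * (hy (P j) * hy (P l))\<^sup>2"
      by (simp add: eq_neg_iff_add_eq_0)
    with False show "(hx (P j) * hx (P l))\<^sup>2 = k * (hy (P j) * hy (P l))\<^sup>2"
      by (simp add: k_def field_simps)
  qed
  show ?thesis
  proof (cases "k > 0")
    case True
    show ?thesis
      by (intro disjI2) (rule zariski_irreducible_prod_proportional[OF assms(1-4) True square])
  next
    case False
    have "\<forall>P\<in>\<Gamma>. P j = Some 0 \<or> P l = Some 0"
    proof
      fix P assume "P \<in> \<Gamma>"
      from bspec[OF square this] False have "(hx (P j) * hx (P l))\<^sup>2 \<le> 0"
        using mult_nonpos_nonneg[of k] by simp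
      then show "P j = Some 0 \<or> P l = Some 0"
        by (simp add: hx_eq_0_iff)
    qed
    then show ?thesis
      by (rule disjI1)
  qed
qed

section \<open>Principal \<open>2 \<times> 2\<close> blocks and realisability\<close>

lemma det_2x2:
  assumes "A \<in> carrier_mat 2 2"
  shows "det A = A $$ (0, 0) * A $$ (1, 1) - A $$ (0, 1) * A $$ (1, 0)"
proof -
  have "det A = (\<Sum>i<2. A $$ (i, 0) * cofactor A i 0)"
    by (rule laplace_expansion_column[OF assms]) simp
  also have "\<dots> = A $$ (0, 0) * cofactor A 0 0 + A $$ (1, 0) * cofactor A 1 0"
    by (simp add: numeral_2_eq_2)
  also have "cofactor A 0 0 = A $$ (1, 1)"
    unfolding cofactor_def using assms by (subst det_single) (auto simp: mat_delete_def)
  also have "cofactor A 1 0 = - A $$ (0, 1)"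
    unfolding cofactor_def using assms by (subst det_single) (auto simp: mat_delete_def)
  finally show ?thesis
    by simp
qed

lemma det_submatrix_pair:
  assumes G: "G \<in> carrier_mat n n" and "p < q" "q < n"
  shows "det (submatrix G {p, q} {p, q}) = G $$ (p, p) * G $$ (q, q) - G $$ (p, q) * G $$ (q, p)"
proof -
  let ?M = "submatrix G {p, q} {p, q}"
  have rows: "{i. i < dim_row G \<and> i \<in> {p, q}} = {p, q}"
    and cols: "{i. i < dim_col G \<and> i \<in> {p, q}} = {p, q}"
    using assms by auto
  have "card {p, q} = 2"
    using assms(2) by simp
  then have M: "?M \<in> carrier_mat 2 2"
    unfolding carrier_mat_def mem_Collect_eq dim_submatrix rows cols by simp
  have "{i \<in> {p, q}. i < p} = {}" "{i \<in> {p, q}. i < q} = {p}"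
    using assms(2) by auto
  then have idx: "card {i \<in> {p, q}. i < p} = 0" "card {i \<in> {p, q}. i < q} = 1"
    by simp_all
  have dims: "p < dim_row G" "q < dim_row G" "p < dim_col G" "q < dim_col G"
    using G assms(2,3) by auto
  have "?M $$ (0, 0) = G $$ (p, p)" "?M $$ (0, 1) = G $$ (p, q)"
    "?M $$ (1, 0) = G $$ (q, p)" "?M $$ (1, 1) = G $$ (q, q)"
    using submatrix_index_card[OF dims(1) dims(3), of "{p, q}" "{p, q}"]
      submatrix_index_card[OF dims(1) dims(4), of "{p, q}" "{p, q}"]
      submatrix_index_card[OF dims(2) dims(3), of "{p, q}" "{p, q}"]
      submatrix_index_card[OF dims(2) dims(4), of "{p, q}" "{p, q}"]
    unfolding idx by simp_all
  then show ?thesis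
    using det_2x2[OF M] by simp
qed

lemma principal_minors_pos_pair:
  assumes "principal_minors_pos n G" "G \<in> carrier_mat n n" "3 \<le> n" "p < n" "q < n" "p \<noteq> q"
  shows "G $$ (p, q) * G $$ (q, p) < G $$ (p, p) * G $$ (q, q)"
proof -
  have "{p, q} \<subseteq> {0..<n}" "card {p, q} = 2"
    using assms(4-6) by auto
  then have "det (submatrix G {p, q} {p, q}) > 0"
    using assms(1,3) unfolding principal_minors_pos_def by simp
  moreover have "det (submatrix G {p, q} {p, q})
      = G $$ (p, p) * G $$ (q, q) - G $$ (p, q) * G $$ (q, p)"
  proof (cases "p < q")
    case True
    show ?thesis by (rule det_submatrix_pair[OF assms(2) True assms(5)])
  next
    case False
    then have "q < p" using assms(6) by simp
    then show ?thesis
      using det_submatrix_pair[OF assms(2) _ assms(4), of q] by (simp add: insert_commute)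
  qed
  ultimately show ?thesis
    by simp
qed

lemma sum_two_points:
  fixes f :: "'a \<Rightarrow> 'b :: semiring_0"
  assumes "finite A" "p \<in> A" "q \<in> A" "p \<noteq> q"
  shows "(\<Sum>k\<in>A. f k * (if k = p then u else if k = q then w else 0)) = f p * u + f q * w"
proof -
  have "f k * (if k = p then u else if k = q then w else 0)
      = (if k = p then f p * u else 0) + (if k = q then f q * w else 0)" for k
    using assms(4) by auto
  then show ?thesis
    using assms by (simp add: sum.distrib)
qed

lemma quadratic_form_two_points:
  fixes G :: "real mat" and s :: real
  assumes G: "G \<in> carrier_mat n n" and "p < n" "q < n" "p \<noteq> q"
  defines "v \<equiv> vec n (\<lambda>i. if i = p then 1 else if i = q then s else 0)"
  shows "v \<bullet> (G *\<^sub>v v) = G $$ (p, p) + s * (G $$ (p, q) + G $$ (q, p)) + s\<^sup>2 * G $$ (q, q)"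
proof -
  have Gv: "(G *\<^sub>v v) $ i = G $$ (i, p) + G $$ (i, q) * s" if "i < n" for i
    using G that sum_two_points[of "{0..<n}" p q "\<lambda>k. G $$ (i, k)" 1 s] assms(2-4)
    by (simp add: v_def mult_mat_vec_def scalar_prod_def row_def)
  have "v \<bullet> (G *\<^sub>v v)
      = (\<Sum>i\<in>{0..<n}. (G *\<^sub>v v) $ i * (if i = p then 1 else if i = q then s else 0))"
    using G by (simp add: v_def scalar_prod_def mult.commute)
  also have "\<dots> = (G $$ (p, p) + G $$ (p, q) * s) * 1 + (G $$ (q, p) + G $$ (q, q) * s) * s"
    using sum_two_points[of "{0..<n}" p q "\<lambda>i. (G *\<^sub>v v) $ i" 1 s] assms(2-4) by (simp add: Gv)
  finally show ?thesis
    by (simp add: algebra_simps power2_eq_square)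
qed

lemma positive_definite_mat_pair:
  fixes G :: "real mat"
  assumes "positive_definite_mat n G" "G \<in> carrier_mat n n" "p < n" "q < n" "p \<noteq> q"
  shows "\<bar>G $$ (p, q) + G $$ (q, p)\<bar> < G $$ (p, p) + G $$ (q, q)"
proof -
  have "0 < G $$ (p, p) + s * (G $$ (p, q) + G $$ (q, p)) + s\<^sup>2 * G $$ (q, q)" if "s\<^sup>2 = 1" for s
  proof -
    let ?v = "vec n (\<lambda>i. if i = p then 1 else if i = q then s else 0) :: real vec"
    have "?v $ p \<noteq> 0"
      using assms(3) by simp
    then have "?v \<noteq> 0\<^sub>v n"
      using assms(3) by (metis index_zero_vec(1))
    then have "0 < ?v \<bullet> (G *\<^sub>v ?v)"
      using assms(1) unfolding positive_definite_mat_def by simp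
    then show ?thesis
      using quadratic_form_two_points[OF assms(2-5)] by simp
  qed
  from this[of 1] this[of "-1"] show ?thesis
    by auto
qed

lemma realisable_obtain_bound:
  assumes "realisable m a b e" "j < m" "l < m" "j \<noteq> l" "a l j = a j l" "e l j = e j l"
  obtains x y :: real
  where "x \<noteq> 0" "y \<noteq> 0" "\<bar>- a j l / (x * y) + y * b j l / x + x * b l j / y - x * y * e j l\<bar> < 2"
proof -
  obtain n J lam g where "3 \<le> n" and onto: "\<forall>j<m. \<exists>p<n. J p = j" and lam: "\<forall>p<n. lam p \<noteq> 0"
    and "condition_S n (Gmat n J lam g a b e) (Hmat n J lam g b e) \<or>
         condition_E n (Gmat n J lam g a b e) (Hmat n J lam g b e) \<or>
         condition_L n (Gmat n J lam g a b e) (Hmat n J lam g b e)"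
    using assms(1) unfolding realisable_def Let_def by blast
  then have cases: "positive_definite_mat n (Gmat n J lam g a b e) \<or>
      principal_minors_pos n (Gmat n J lam g a b e)"
    unfolding condition_S_def condition_E_def condition_L_def by blast
  obtain p q where "p < n" "J p = j" "q < n" "J q = l"
    using onto assms(2,3) by blast
  define G x y where "G = Gmat n J lam g a b e" and "x = lam p" and "y = lam q"
  define \<gamma> where "\<gamma> = - a j l / (x * y) + y * b j l / x + x * b l j / y - x * y * e j l"
  have "p \<noteq> q"
    using \<open>J p = j\<close> \<open>J q = l\<close> assms(4) by blast
  have G: "G \<in> carrier_mat n n" "G $$ (p, p) = 1" "G $$ (q, q) = 1"
    "G $$ (p, q) = \<gamma> / 2" "G $$ (q, p) = \<gamma> / 2"
    using \<open>p < n\<close> \<open>q < n\<close> \<open>p \<noteq> q\<close> \<open>J p = j\<close> \<open>J q = l\<close> assms(4-6)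
    by (simp_all add: G_def Gmat_def \<gamma>_def x_def y_def algebra_simps)
  from cases have "\<bar>\<gamma> / 2\<bar> < 1"
  proof
    assume "positive_definite_mat n (Gmat n J lam g a b e)"
    from positive_definite_mat_pair[OF this[folded G_def] G(1) \<open>p < n\<close> \<open>q < n\<close> \<open>p \<noteq> q\<close>]
    show ?thesis
      using G by simp
  next
    assume "principal_minors_pos n (Gmat n J lam g a b e)"
    from principal_minors_pos_pair
      [OF this[folded G_def] G(1) \<open>3 \<le> n\<close> \<open>p < n\<close> \<open>q < n\<close> \<open>p \<noteq> q\<close>]
    have "(\<gamma> / 2)\<^sup>2 < 1"
      using G by (simp add: power2_eq_square)
    then show ?thesis
      by (simp add: abs_square_less_1)
  qed
  then show thesis
    using lam \<open>p < n\<close> \<open>q < n\<close> by (intro that[of x y]) (simp_all add: \<gamma>_def x_def y_def)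
qed

lemma real_EPBQ_curve_closed_irreducible:
  assumes "real_EPBQ_curve m \<Gamma> a b e"
  shows "zariski_closed m \<Gamma>" "zariski_irreducible m \<Gamma>"
  using assms unfolding real_EPBQ_curve_def irreducible_real_curve_def by auto

lemma real_EPBQ_curve_rel:
  assumes "real_EPBQ_curve m \<Gamma> a b e" "j < m" "l < m" "j \<noteq> l" "P \<in> \<Gamma>"
  shows "biquad_rel (a j l) (b j l) (b l j) (e j l) (P j) (P l)"
  using assms unfolding real_EPBQ_curve_def by blast

lemma real_EPBQ_curve_coord_not_const:
  assumes "real_EPBQ_curve m \<Gamma> a b e" "j < m" "z = None \<or> z = Some 0"
  shows "\<not> (\<forall>P\<in>\<Gamma>. P j = z)"
  using assms unfolding real_EPBQ_curve_def by auto

lemma real_EPBQ_curve_not_proportional: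
  assumes "real_EPBQ_curve m \<Gamma> a b e" "j < m" "l < m" "j \<noteq> l" "c \<noteq> 0"
  shows "\<not> (\<forall>P\<in>\<Gamma>. hx (P j) * hy (P l) = c * hy (P j) * hx (P l))"
    and "\<not> (\<forall>P\<in>\<Gamma>. hx (P j) * hx (P l) = c * hy (P j) * hy (P l))"
proof -
  have "\<not> (\<exists>c. c \<noteq> 0 \<and> (\<forall>P\<in>\<Gamma>. hx (P j) * hy (P l) = c * hy (P j) * hx (P l))) \<and>
      \<not> (\<exists>c. c \<noteq> 0 \<and> (\<forall>P\<in>\<Gamma>. hx (P j) * hx (P l) = c * hy (P j) * hy (P l)))"
    using assms(1-4) unfolding real_EPBQ_curve_def by blast
  with assms(5) show "\<not> (\<forall>P\<in>\<Gamma>. hx (P j) * hy (P l) = c * hy (P j) * hx (P l))"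
    and "\<not> (\<forall>P\<in>\<Gamma>. hx (P j) * hx (P l) = c * hy (P j) * hy (P l))"
    by blast+
qed

lemma real_EPBQ_curve_not_always_one_coord_eq:
  assumes curve: "real_EPBQ_curve m \<Gamma> a b e" and "j < m" "l < m" "z = None \<or> z = Some 0"
  shows "\<not> (\<forall>P\<in>\<Gamma>. P j = z \<or> P l = z)"
proof
  assume "\<forall>P\<in>\<Gamma>. P j = z \<or> P l = z"
  then have "(\<forall>P\<in>\<Gamma>. P j \<in> {z}) \<or> (\<forall>P\<in>\<Gamma>. P l \<in> {z})"
    by (intro zariski_irreducible_cases[OF real_EPBQ_curve_closed_irreducible[OF curve]]
        poly_condition_coord_mem assms(2,3)) auto
  then show False
    using real_EPBQ_curve_coord_not_const[OF curve _ assms(4)] assms(2,3) by auto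
qed

lemma real_EPBQ_curve_coeff_sym:
  assumes curve: "real_EPBQ_curve m \<Gamma> a b e" and "j < m" "l < m" "j \<noteq> l"
  shows "a l j = a j l" and "e l j = e j l"
proof -
  define \<alpha> \<epsilon> where "\<alpha> = a j l - a l j" and "\<epsilon> = e j l - e l j"
  have quadric: "\<forall>P\<in>\<Gamma>. \<alpha> * (hx (P j) * hx (P l))\<^sup>2 + \<epsilon> * (hy (P j) * hy (P l))\<^sup>2 = 0"
  proof
    fix P assume "P \<in> \<Gamma>"
    from real_EPBQ_curve_rel[OF curve assms(2-4) this] real_EPBQ_curve_rel[OF curve assms(3,2) _ this] assms(4)
    show "\<alpha> * (hx (P j) * hx (P l))\<^sup>2 + \<epsilon> * (hy (P j) * hy (P l))\<^sup>2 = 0"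
      unfolding biquad_rel_def \<alpha>_def \<epsilon>_def by (simp add: algebra_simps power2_eq_square)
  qed
  have "\<alpha> = 0 \<and> \<epsilon> = 0"
  proof (rule ccontr)
    assume "\<not> (\<alpha> = 0 \<and> \<epsilon> = 0)"
    then have "\<alpha> \<noteq> 0 \<or> \<epsilon> \<noteq> 0"
      by simp
    from zariski_irreducible_binary_quadric[OF real_EPBQ_curve_closed_irreducible[OF curve] assms(2,3) this quadric]
    show False
    proof (elim disjE exE conjE)
      assume "\<forall>P\<in>\<Gamma>. P j = Some 0 \<or> P l = Some 0"
      with real_EPBQ_curve_not_always_one_coord_eq[OF curve assms(2,3), of "Some 0"] show False
        by simp
    next
      assume "\<forall>P\<in>\<Gamma>. P j = None \<or> P l = None"
      with real_EPBQ_curve_not_always_one_coord_eq[OF curve assms(2,3), of None] show False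
        by simp
    next
      fix c :: real
      assume "c \<noteq> 0" "\<forall>P\<in>\<Gamma>. hx (P j) * hx (P l) = c * hy (P j) * hy (P l)"
      with real_EPBQ_curve_not_proportional(2)[OF curve assms(2-4) \<open>c \<noteq> 0\<close>] show False
        by blast
    qed
  qed
  then show "a l j = a j l" "e l j = e j l"
    by (simp_all add: \<alpha>_def \<epsilon>_def)
qed

lemma real_EPBQ_curve_coords_not_both_const:
  assumes curve: "real_EPBQ_curve m \<Gamma> a b e" and "j < m" "l < m" "j \<noteq> l"
    and "\<forall>P\<in>\<Gamma>. P j = z" "\<forall>P\<in>\<Gamma>. P l = w"
  shows False
proof -
  obtain s t where "z = Some s" "s \<noteq> 0" "w = Some t" "t \<noteq> 0"
    using real_EPBQ_curve_coord_not_const[OF curve assms(2), of None]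
      real_EPBQ_curve_coord_not_const[OF curve assms(2), of "Some 0"]
      real_EPBQ_curve_coord_not_const[OF curve assms(3), of None]
      real_EPBQ_curve_coord_not_const[OF curve assms(3), of "Some 0"] assms(5,6)
    by (cases z; cases w) auto
  then have "hx (P j) * hy (P l) = (s / t) * hy (P j) * hx (P l)" if "P \<in> \<Gamma>" for P
    using that assms(5,6) by (simp add: hx_def hy_def)
  moreover have "s / t \<noteq> 0"
    using \<open>s \<noteq> 0\<close> \<open>t \<noteq> 0\<close> by simp
  ultimately show False
    using real_EPBQ_curve_not_proportional(1)[OF curve assms(2-4) \<open>s / t \<noteq> 0\<close>] by simp
qed

theorem mainTheorem8:
  fixes m :: nat and \<Gamma> :: "(nat \<Rightarrow> real option) set"
    and a b e :: "nat \<Rightarrow> nat \<Rightarrow> real" and j l :: nat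
  assumes "real_EPBQ_curve m \<Gamma> a b e"
    and "realisable m a b e"
    and "j < m" and "l < m" and "j \<noteq> l"
  shows "(1 - a j l * e j l - b j l * b l j) ^ 2 - 4 * a j l * b j l * b l j * e j l > 0"
proof (rule ccontr)
  assume "\<not> ?thesis"
  then have disc: "(1 - a j l * e j l - b j l * b l j)\<^sup>2 - 4 * a j l * b j l * b l j * e j l \<le> 0"
    by simp
  obtain x y where "x \<noteq> 0" "y \<noteq> 0"
    and "\<bar>- a j l / (x * y) + y * b j l / x + x * b l j / y - x * y * e j l\<bar> < 2"
    using realisable_obtain_bound[OF assms(2-5) real_EPBQ_curve_coeff_sym[OF assms(1,3-5)]] .
  note finite_values = biquad_rel_values_finite_if_bounded[OF disc this]
  note zariski = real_EPBQ_curve_closed_irreducible[OF assms(1)]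
  have rel: "\<forall>P\<in>\<Gamma>. biquad_rel (a j l) (b j l) (b l j) (e j l) (P j) (P l)"
    using real_EPBQ_curve_rel[OF assms(1,3-5)] by blast
  obtain z where "\<forall>P\<in>\<Gamma>. P j = z"
    using zariski_irreducible_coord_const[OF zariski assms(3) finite_values(2)] rel by blast
  moreover obtain w where "\<forall>P\<in>\<Gamma>. P l = w"
    using zariski_irreducible_coord_const[OF zariski assms(4) finite_values(1)] rel by blast
  ultimately show False
    using real_EPBQ_curve_coords_not_both_const[OF assms(1,3-5)] by blast
qed

end
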